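(* Let $K$ be a field, $\mathcal A$ a $K$-algebra, $\vartheta$ any one of the four types (left, right, pre-two-sided, two-sided), and $(M_i)_{i\ge1}$ a sequence of non-trivial $\vartheta$-Mathieu subspaces of $\mathcal A$ with $M_i\subseteq M_{i+1}$ for all $i\ge1$. Assume every element of $\sqrt{\bigcup_{i\ge1}M_i}$ is algebraic over $K$. Then $\bigcup_{i\ge1}M_i$ is a non-trivial $\vartheta$-Mathieu subspace of $\mathcal A$.
   Context: All algebras are associative and unital. $\sqrt S$ is the set of $a\in\mathcal A$ with $a^m\in S$ for all sufficiently large $m$. A subspace is non-trivial if it is neither $0$ nor $\mathcal A$. A $K$-subspace $V$ is a left (resp. right) Mathieu subspace if whenever $a^m\in V$ for all $m\ge1$, then for every $b\in\mathcal A$, $ba^m\in V$ (resp. $a^mb\in V$) for all sufficiently large $m$; pre-two-sided if both left and right; two-sided if whenever $a^m\in V$ for all $m\ge1$, for all $b,c\in\mathcal A$, $ba^mc\in V$ for all sufficiently large $m$. *)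

theory Defs
  imports Main "HOL-Computational_Algebra.Polynomial"
begin

definition is_K_algebra :: "('k::field \<Rightarrow> 'a::ring_1 \<Rightarrow> 'a) \<Rightarrow> bool" where
  "is_K_algebra sc \<longleftrightarrow> vector_space sc \<and>
     (\<forall>c x y. sc c (x * y) = sc c x * y \<and> sc c (x * y) = x * sc c y)"

definition alg_poly_eval :: "('k::field \<Rightarrow> 'a::ring_1 \<Rightarrow> 'a) \<Rightarrow> 'k poly \<Rightarrow> 'a \<Rightarrow> 'a" where
  "alg_poly_eval sc p a = (\<Sum>i\<le>degree p. sc (coeff p i) (a ^ i))"

definition algebraic_over :: "('k::field \<Rightarrow> 'a::ring_1 \<Rightarrow> 'a) \<Rightarrow> 'a \<Rightarrow> bool" where
  "algebraic_over sc a \<longleftrightarrow> (\<exists>p. p \<noteq> 0 \<and> alg_poly_eval sc p a = 0)"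

definition rad :: "'a::monoid_mult set \<Rightarrow> 'a set" where
  "rad S = {a. \<exists>N. \<forall>m\<ge>N. a ^ m \<in> S}"

definition nontrivial_subspace :: "'a::ring_1 set \<Rightarrow> bool" where
  "nontrivial_subspace V \<longleftrightarrow> V \<noteq> {0} \<and> V \<noteq> UNIV"

datatype mathieu_type = LeftM | RightM | PreTwoSidedM | TwoSidedM

definition left_mathieu :: "('k::field \<Rightarrow> 'a::ring_1 \<Rightarrow> 'a) \<Rightarrow> 'a set \<Rightarrow> bool" where
  "left_mathieu sc V \<longleftrightarrow> module.subspace sc V \<and>
     (\<forall>a. (\<forall>m\<ge>1. a ^ m \<in> V) \<longrightarrow> (\<forall>b. \<exists>N. \<forall>m\<ge>N. b * a ^ m \<in> V))"

definition right_mathieu :: "('k::field \<Rightarrow> 'a::ring_1 \<Rightarrow> 'a) \<Rightarrow> 'a set \<Rightarrow> bool" where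
  "right_mathieu sc V \<longleftrightarrow> module.subspace sc V \<and>
     (\<forall>a. (\<forall>m\<ge>1. a ^ m \<in> V) \<longrightarrow> (\<forall>b. \<exists>N. \<forall>m\<ge>N. a ^ m * b \<in> V))"

definition two_sided_mathieu :: "('k::field \<Rightarrow> 'a::ring_1 \<Rightarrow> 'a) \<Rightarrow> 'a set \<Rightarrow> bool" where
  "two_sided_mathieu sc V \<longleftrightarrow> module.subspace sc V \<and>
     (\<forall>a. (\<forall>m\<ge>1. a ^ m \<in> V) \<longrightarrow> (\<forall>b c. \<exists>N. \<forall>m\<ge>N. b * a ^ m * c \<in> V))"

fun is_mathieu :: "mathieu_type \<Rightarrow> ('k::field \<Rightarrow> 'a::ring_1 \<Rightarrow> 'a) \<Rightarrow> 'a set \<Rightarrow> bool" where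
  "is_mathieu LeftM sc V = left_mathieu sc V"
| "is_mathieu RightM sc V = right_mathieu sc V"
| "is_mathieu PreTwoSidedM sc V = (left_mathieu sc V \<and> right_mathieu sc V)"
| "is_mathieu TwoSidedM sc V = two_sided_mathieu sc V"

end

theory Submission
  imports Defs
begin

text \<open>If a is algebraic, a nonzero annihilating polynomial of degree d expresses a^n, for n \<ge> d,
  as a linear combination of lower powers; so a subspace containing a, ..., a^d contains every
  positive power of a. In an increasing chain the finitely many powers a, ..., a^d of an element
  of the radical of the union already lie in a single member M_i, hence all positive powers do,
  and the Mathieu property of M_i yields that of the union. Non-triviality passes to the union
  because a Mathieu subspace containing 1 is the whole algebra.\<close>

lemma power_recurrence_if_alg_poly_eval_eq_0:
  fixes sc :: "'k::field \<Rightarrow> 'a::ring_1 \<Rightarrow> 'a"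
  assumes alg: "is_K_algebra sc" and ev: "alg_poly_eval sc p a = 0" and n: "degree p \<le> n"
  shows "sc (lead_coeff p) (a ^ n) = - (\<Sum>i<degree p. sc (coeff p i) (a ^ (n - degree p + i)))"
proof -
  interpret vector_space sc using alg unfolding is_K_algebra_def by blast
  have scale_right: "\<And>c x y. sc c (x * y) = x * sc c y" using alg unfolding is_K_algebra_def by blast
  define d where "d = degree p"
  have "0 = (\<Sum>i<d. sc (coeff p i) (a ^ i)) + sc (lead_coeff p) (a ^ d)"
    using ev by (simp add: alg_poly_eval_def d_def lessThan_Suc_atMost[symmetric])
  then have top: "sc (lead_coeff p) (a ^ d) = - (\<Sum>i<d. sc (coeff p i) (a ^ i))"
    by (simp add: eq_neg_iff_add_eq_0 add.commute)
  have "sc (lead_coeff p) (a ^ n) = a ^ (n - d) * sc (lead_coeff p) (a ^ d)"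
    using n by (simp add: d_def scale_right[symmetric] power_add[symmetric])
  also have "\<dots> = - (\<Sum>i<d. sc (coeff p i) (a ^ (n - d + i)))"
    by (simp add: top sum_distrib_left scale_right[symmetric] power_add)
  finally show ?thesis by (simp add: d_def)
qed

lemma powers_in_subspace_if_algebraic:
  fixes sc :: "'k::field \<Rightarrow> 'a::ring_1 \<Rightarrow> 'a"
  assumes alg: "is_K_algebra sc" and S: "module.subspace sc S"
    and p: "p \<noteq> 0" and ev: "alg_poly_eval sc p a = 0"
    and low: "\<And>m. 1 \<le> m \<Longrightarrow> m \<le> degree p \<Longrightarrow> a ^ m \<in> S"
  shows "1 \<le> n \<Longrightarrow> a ^ n \<in> S"
proof (induction n rule: less_induct)
  case (less n)
  interpret vector_space sc using alg unfolding is_K_algebra_def by blast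
  show ?case
  proof (cases "n \<le> degree p")
    case True
    then show ?thesis using low less.prems by blast
  next
    case False
    have "(\<Sum>i<degree p. sc (coeff p i) (a ^ (n - degree p + i))) \<in> S"
      using False by (intro subspace_sum[OF S] subspace_scale[OF S] less.IH) auto
    then have "sc (lead_coeff p) (a ^ n) \<in> S"
      using power_recurrence_if_alg_poly_eval_eq_0[OF alg ev] False subspace_neg[OF S] by simp
    then have "sc (inverse (lead_coeff p)) (sc (lead_coeff p) (a ^ n)) \<in> S"
      by (rule subspace_scale[OF S])
    then show ?thesis using p by simp
  qed
qed

lemma (in module) subspace_Union_chain:
  assumes nonempty: "\<C> \<noteq> {}" and chain: "chain\<^sub>\<subseteq> \<C>"
    and subspaces: "\<And>V. V \<in> \<C> \<Longrightarrow> subspace V"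
  shows "subspace (\<Union>\<C>)"
  unfolding subspace_def
proof (intro conjI ballI allI)
  obtain V where "V \<in> \<C>" using nonempty by blast
  then show "0 \<in> \<Union>\<C>" using subspace_0[OF subspaces] by blast
next
  fix x c assume "x \<in> \<Union>\<C>"
  then obtain V where "V \<in> \<C>" "x \<in> V" by blast
  then show "scale c x \<in> \<Union>\<C>" using subspace_scale[OF subspaces] by blast
next
  fix x y assume "x \<in> \<Union>\<C>" "y \<in> \<Union>\<C>"
  then have "{x, y} \<subseteq> \<Union>\<C>" by simp
  from finite_subset_Union_chain[OF _ this nonempty chain[unfolded chain_subset_alt_def]]
  obtain V where "V \<in> \<C>" "{x, y} \<subseteq> V" by blast
  then show "x + y \<in> \<Union>\<C>" using subspace_add[OF subspaces] by blast
qed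

lemma subset_chain_image_atLeast:
  assumes grow: "\<And>i. k \<le> i \<Longrightarrow> M i \<subseteq> M (Suc i)"
  shows "chain\<^sub>\<subseteq> (M ` {k..})"
proof -
  have mono: "M i \<subseteq> M j" if "k \<le> i" "i \<le> j" for i j
    using that(2)
  proof (induction j rule: dec_induct)
    case (step n)
    then show ?case using grow[of n] that(1) by simp
  qed simp
  show ?thesis
    unfolding chain_subset_def
  proof (intro ballI)
    fix A B assume "A \<in> M ` {k..}" "B \<in> M ` {k..}"
    then obtain i j where "A = M i" "B = M j" "k \<le> i" "k \<le> j" by auto
    then show "A \<subseteq> B \<or> B \<subseteq> A" using mono nle_le by metis
  qed
qed

lemma powers_in_chain_member_if_algebraic:
  fixes sc :: "'k::field \<Rightarrow> 'a::ring_1 \<Rightarrow> 'a"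
  assumes alg: "is_K_algebra sc" and nonempty: "\<C> \<noteq> {}" and chain: "chain\<^sub>\<subseteq> \<C>"
    and subspaces: "\<And>V. V \<in> \<C> \<Longrightarrow> module.subspace sc V"
    and algebraic: "algebraic_over sc a" and powers: "\<forall>m\<ge>1. a ^ m \<in> \<Union>\<C>"
  shows "\<exists>V\<in>\<C>. \<forall>m\<ge>1. a ^ m \<in> V"
proof -
  obtain p where p: "p \<noteq> 0" "alg_poly_eval sc p a = 0"
    using algebraic unfolding algebraic_over_def by blast
  have "(\<lambda>m. a ^ m) ` {1..degree p} \<subseteq> \<Union>\<C>" using powers by auto
  then obtain V where V: "V \<in> \<C>" "(\<lambda>m. a ^ m) ` {1..degree p} \<subseteq> V"
    using finite_subset_Union_chain[of "(\<lambda>m. a ^ m) ` {1..degree p}" \<C>] nonempty chain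
    by (auto simp: chain_subset_alt_def)
  then have "a ^ m \<in> V" if "1 \<le> m" "m \<le> degree p" for m
    using that by auto
  then have "\<forall>m\<ge>1. a ^ m \<in> V"
    using powers_in_subspace_if_algebraic[OF alg subspaces[OF V(1)] p] by blast
  then show ?thesis using V(1) by blast
qed

lemma is_mathieu_subspace: "is_mathieu t sc V \<Longrightarrow> module.subspace sc V"
  by (cases t) (auto simp: left_mathieu_def right_mathieu_def two_sided_mathieu_def)

lemma is_mathieu_one_imp_UNIV:
  fixes V :: "'a::ring_1 set"
  assumes mathieu: "is_mathieu t sc V" and one: "1 \<in> V"
  shows "V = UNIV"
proof -
  have powers: "\<forall>m\<ge>1. (1::'a) ^ m \<in> V" using one by simp
  have "b \<in> V" for b
  proof -
    consider "left_mathieu sc V" | "right_mathieu sc V" | "two_sided_mathieu sc V"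
      using mathieu by (cases t) auto
    then have "\<exists>N. b * 1 ^ N \<in> V \<or> 1 ^ N * b \<in> V \<or> b * 1 ^ N * 1 \<in> V"
    proof cases
      case 1
      then show ?thesis using powers unfolding left_mathieu_def by blast
    next
      case 2
      then show ?thesis using powers unfolding right_mathieu_def by blast
    next
      case 3
      then show ?thesis using powers unfolding two_sided_mathieu_def by blast
    qed
    then show ?thesis by auto
  qed
  then show ?thesis by blast
qed

lemma left_mathieu_if_powers_in_left_mathieu_subset:
  assumes U: "module.subspace sc U"
    and reflect: "\<And>a. \<forall>m\<ge>1. a ^ m \<in> U \<Longrightarrow> \<exists>V\<subseteq>U. left_mathieu sc V \<and> (\<forall>m\<ge>1. a ^ m \<in> V)"
  shows "left_mathieu sc U"
  unfolding left_mathieu_def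
proof (intro conjI U allI impI)
  fix a b assume "\<forall>m\<ge>1. a ^ m \<in> U"
  from reflect[OF this] obtain V where "V \<subseteq> U" "left_mathieu sc V" "\<forall>m\<ge>1. a ^ m \<in> V" by blast
  then obtain N where "\<forall>m\<ge>N. b * a ^ m \<in> V" unfolding left_mathieu_def by blast
  then show "\<exists>N. \<forall>m\<ge>N. b * a ^ m \<in> U" using \<open>V \<subseteq> U\<close> by blast
qed

lemma right_mathieu_if_powers_in_right_mathieu_subset:
  assumes U: "module.subspace sc U"
    and reflect: "\<And>a. \<forall>m\<ge>1. a ^ m \<in> U \<Longrightarrow> \<exists>V\<subseteq>U. right_mathieu sc V \<and> (\<forall>m\<ge>1. a ^ m \<in> V)"
  shows "right_mathieu sc U"
  unfolding right_mathieu_def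
proof (intro conjI U allI impI)
  fix a b assume "\<forall>m\<ge>1. a ^ m \<in> U"
  from reflect[OF this] obtain V where "V \<subseteq> U" "right_mathieu sc V" "\<forall>m\<ge>1. a ^ m \<in> V" by blast
  then obtain N where "\<forall>m\<ge>N. a ^ m * b \<in> V" unfolding right_mathieu_def by blast
  then show "\<exists>N. \<forall>m\<ge>N. a ^ m * b \<in> U" using \<open>V \<subseteq> U\<close> by blast
qed

lemma two_sided_mathieu_if_powers_in_two_sided_mathieu_subset:
  assumes U: "module.subspace sc U"
    and reflect: "\<And>a. \<forall>m\<ge>1. a ^ m \<in> U \<Longrightarrow> \<exists>V\<subseteq>U. two_sided_mathieu sc V \<and> (\<forall>m\<ge>1. a ^ m \<in> V)"
  shows "two_sided_mathieu sc U"
  unfolding two_sided_mathieu_def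
proof (intro conjI U allI impI)
  fix a b c assume "\<forall>m\<ge>1. a ^ m \<in> U"
  from reflect[OF this] obtain V where "V \<subseteq> U" "two_sided_mathieu sc V" "\<forall>m\<ge>1. a ^ m \<in> V" by blast
  then obtain N where "\<forall>m\<ge>N. b * a ^ m * c \<in> V" unfolding two_sided_mathieu_def by blast
  then show "\<exists>N. \<forall>m\<ge>N. b * a ^ m * c \<in> U" using \<open>V \<subseteq> U\<close> by blast
qed

lemma is_mathieu_if_powers_in_mathieu_subset:
  assumes U: "module.subspace sc U"
    and reflect: "\<And>a. \<forall>m\<ge>1. a ^ m \<in> U \<Longrightarrow> \<exists>V\<subseteq>U. is_mathieu t sc V \<and> (\<forall>m\<ge>1. a ^ m \<in> V)"
  shows "is_mathieu t sc U"
proof (cases t)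
  case LeftM
  then show ?thesis
    using reflect by (simp add: left_mathieu_if_powers_in_left_mathieu_subset[OF U])
next
  case RightM
  then show ?thesis
    using reflect by (simp add: right_mathieu_if_powers_in_right_mathieu_subset[OF U])
next
  case PreTwoSidedM
  have "\<exists>V\<subseteq>U. left_mathieu sc V \<and> (\<forall>m\<ge>1. a ^ m \<in> V)"
    and "\<exists>V\<subseteq>U. right_mathieu sc V \<and> (\<forall>m\<ge>1. a ^ m \<in> V)"
    if "\<forall>m\<ge>1. a ^ m \<in> U" for a
    using reflect[OF that] PreTwoSidedM by auto
  then show ?thesis
    using PreTwoSidedM left_mathieu_if_powers_in_left_mathieu_subset[OF U]
      right_mathieu_if_powers_in_right_mathieu_subset[OF U] by simp
next
  case TwoSidedM
  then show ?thesis
    using reflect by (simp add: two_sided_mathieu_if_powers_in_two_sided_mathieu_subset[OF U])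
qed

lemma is_mathieu_Union_chain:
  fixes sc :: "'k::field \<Rightarrow> 'a::ring_1 \<Rightarrow> 'a"
  assumes alg: "is_K_algebra sc" and nonempty: "\<C> \<noteq> {}" and chain: "chain\<^sub>\<subseteq> \<C>"
    and mathieu: "\<And>V. V \<in> \<C> \<Longrightarrow> is_mathieu t sc V"
    and algebraic: "\<forall>a \<in> rad (\<Union>\<C>). algebraic_over sc a"
  shows "is_mathieu t sc (\<Union>\<C>)"
proof -
  interpret vector_space sc using alg unfolding is_K_algebra_def by blast
  have subspaces: "subspace V" if "V \<in> \<C>" for V
    using mathieu[OF that] by (rule is_mathieu_subspace)
  show ?thesis
  proof (rule is_mathieu_if_powers_in_mathieu_subset)
    show "subspace (\<Union>\<C>)" using nonempty chain subspaces by (rule subspace_Union_chain)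
  next
    fix a assume powers: "\<forall>m\<ge>1. a ^ m \<in> \<Union>\<C>"
    then have "a \<in> rad (\<Union>\<C>)" unfolding rad_def by blast
    with algebraic have "algebraic_over sc a" by blast
    from powers_in_chain_member_if_algebraic[OF alg nonempty chain subspaces this powers]
    obtain V where "V \<in> \<C>" "\<forall>m\<ge>1. a ^ m \<in> V" by blast
    then show "\<exists>V\<subseteq>\<Union>\<C>. is_mathieu t sc V \<and> (\<forall>m\<ge>1. a ^ m \<in> V)"
      using mathieu by blast
  qed
qed

lemma nontrivial_subspace_Union_mathieu:
  fixes sc :: "'k::field \<Rightarrow> 'a::ring_1 \<Rightarrow> 'a"
  assumes alg: "is_K_algebra sc" and nonempty: "\<C> \<noteq> {}"
    and members: "\<And>V. V \<in> \<C> \<Longrightarrow> is_mathieu t sc V \<and> nontrivial_subspace V"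
  shows "nontrivial_subspace (\<Union>\<C>)"
  unfolding nontrivial_subspace_def
proof
  have "1 \<notin> V" if "V \<in> \<C>" for V
    using members[OF that] is_mathieu_one_imp_UNIV unfolding nontrivial_subspace_def by blast
  then show "\<Union>\<C> \<noteq> UNIV" by blast
next
  interpret vector_space sc using alg unfolding is_K_algebra_def by blast
  obtain V where V: "V \<in> \<C>" using nonempty by blast
  have "0 \<in> V" using members[OF V] is_mathieu_subspace subspace_0 by blast
  moreover have "V \<noteq> {0}" using members[OF V] unfolding nontrivial_subspace_def by blast
  ultimately show "\<Union>\<C> \<noteq> {0}" using V by blast
qed

theorem proposition4p18:
  fixes sc :: "'k::field \<Rightarrow> 'a::ring_1 \<Rightarrow> 'a"
    and \<theta> :: mathieu_type
    and M :: "nat \<Rightarrow> 'a set"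
  assumes "is_K_algebra sc"
    and "\<forall>i\<ge>1. is_mathieu \<theta> sc (M i) \<and> nontrivial_subspace (M i)"
    and "\<forall>i\<ge>1. M i \<subseteq> M (Suc i)"
    and "\<forall>a \<in> rad (\<Union>i\<in>{1..}. M i). algebraic_over sc a"
  shows "is_mathieu \<theta> sc (\<Union>i\<in>{1..}. M i) \<and> nontrivial_subspace (\<Union>i\<in>{1..}. M i)"
proof
  have nonempty: "M ` {1..} \<noteq> {}" by simp
  have chain: "chain\<^sub>\<subseteq> (M ` {1..})" using assms(3) by (intro subset_chain_image_atLeast) simp
  have members: "is_mathieu \<theta> sc V \<and> nontrivial_subspace V" if "V \<in> M ` {1..}" for V
    using assms(2) that by auto
  show "is_mathieu \<theta> sc (\<Union>i\<in>{1..}. M i)"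
    by (rule is_mathieu_Union_chain[OF assms(1) nonempty chain _ assms(4)]) (use members in blast)
  show "nontrivial_subspace (\<Union>i\<in>{1..}. M i)"
    using assms(1) nonempty members by (rule nontrivial_subspace_Union_mathieu)
qed

end
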